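(* A linear operator $\mathcal A$ on a semiunitary space $U$ is selfadjoint (i.e. $\langle\mathcal Au,v\rangle=\langle u,\mathcal Av\rangle$ for all $u,v\in U$) if and only if it is bounded and the induced operator $\mathcal A_1$ on the unitary space $U/U_0$ is selfadjoint. Likewise, $\mathcal A$ is metric (i.e. $\langle\mathcal Au,\mathcal Av\rangle=\langle u,v\rangle$ for all $u,v\in U$) if and only if it is bounded and $\mathcal A_1$ is metric.
   Context: A semiunitary space is a finite-dimensional complex vector space $U$ with a positive semidefinite Hermitian form $\langle\cdot,\cdot\rangle$; $\|u\|=\sqrt{\langle u,u\rangle}$; $U_0=\{u:\langle u,u\rangle=0\}$, and $U/U_0$ carries the inner product $\langle u+U_0,v+U_0\rangle=\langle u,v\rangle$. An operator is bounded if $\|\mathcal Au\|\le c\|u\|$ for some real $c>0$ and all $u$; then $U_0$ is invariant and $\mathcal A_1(u+U_0):=\mathcal Au+U_0$. *)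

theory Defs
  imports "HOL-Analysis.Analysis"
begin

text \<open>A finite-dimensional complex vector space is modelled as complex ^ 'n
 (every such space is isomorphic to one of these).\<close>

definition semiunitary :: "(complex^'n \<Rightarrow> complex^'n \<Rightarrow> complex) \<Rightarrow> bool" where
  "semiunitary h \<longleftrightarrow>
     (\<forall>x y z. h (x + y) z = h x z + h y z) \<and>
     (\<forall>c x y. h (c *s x) y = c * h x y) \<and>
     (\<forall>x y. h y x = cnj (h x y)) \<and>
     (\<forall>x. 0 \<le> Re (h x x))"

definition snorm :: "(complex^'n \<Rightarrow> complex^'n \<Rightarrow> complex) \<Rightarrow> complex^'n \<Rightarrow> real" where
  "snorm h u = sqrt (Re (h u u))"

definition null_space :: "(complex^'n \<Rightarrow> complex^'n \<Rightarrow> complex) \<Rightarrow> (complex^'n) set" where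
  "null_space h = {u. h u u = 0}"

definition clinear_op :: "(complex^'n \<Rightarrow> complex^'n) \<Rightarrow> bool" where
  "clinear_op A \<longleftrightarrow> Vector_Spaces.linear ((*s) :: complex \<Rightarrow> complex^'n \<Rightarrow> complex^'n) (*s) A"

definition bounded_op :: "(complex^'n \<Rightarrow> complex^'n \<Rightarrow> complex) \<Rightarrow> (complex^'n \<Rightarrow> complex^'n) \<Rightarrow> bool" where
  "bounded_op h A \<longleftrightarrow> (\<exists>c::real. c > 0 \<and> (\<forall>u. snorm h (A u) \<le> c * snorm h u))"

definition selfadjoint_op :: "(complex^'n \<Rightarrow> complex^'n \<Rightarrow> complex) \<Rightarrow> (complex^'n \<Rightarrow> complex^'n) \<Rightarrow> bool" where
  "selfadjoint_op h A \<longleftrightarrow> (\<forall>u v. h (A u) v = h u (A v))"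

definition metric_op :: "(complex^'n \<Rightarrow> complex^'n \<Rightarrow> complex) \<Rightarrow> (complex^'n \<Rightarrow> complex^'n) \<Rightarrow> bool" where
  "metric_op h A \<longleftrightarrow> (\<forall>u v. h (A u) (A v) = h u v)"

definition coset :: "(complex^'n \<Rightarrow> complex^'n \<Rightarrow> complex) \<Rightarrow> complex^'n \<Rightarrow> (complex^'n) set" where
  "coset h u = {u + w | w. w \<in> null_space h}"

definition quotient_space :: "(complex^'n \<Rightarrow> complex^'n \<Rightarrow> complex) \<Rightarrow> (complex^'n) set set" where
  "quotient_space h = range (coset h)"

definition quot_form :: "(complex^'n \<Rightarrow> complex^'n \<Rightarrow> complex) \<Rightarrow> (complex^'n) set \<Rightarrow> (complex^'n) set \<Rightarrow> complex" where
  "quot_form h X Y = h (SOME u. u \<in> X) (SOME v. v \<in> Y)"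

definition induced_op :: "(complex^'n \<Rightarrow> complex^'n \<Rightarrow> complex) \<Rightarrow> (complex^'n \<Rightarrow> complex^'n) \<Rightarrow> (complex^'n) set \<Rightarrow> (complex^'n) set" where
  "induced_op h A X = coset h (A (SOME u. u \<in> X))"

definition quot_selfadjoint :: "(complex^'n \<Rightarrow> complex^'n \<Rightarrow> complex) \<Rightarrow> ((complex^'n) set \<Rightarrow> (complex^'n) set) \<Rightarrow> bool" where
  "quot_selfadjoint h B \<longleftrightarrow>
     (\<forall>X\<in>quotient_space h. \<forall>Y\<in>quotient_space h. quot_form h (B X) Y = quot_form h X (B Y))"

definition quot_metric :: "(complex^'n \<Rightarrow> complex^'n \<Rightarrow> complex) \<Rightarrow> ((complex^'n) set \<Rightarrow> (complex^'n) set) \<Rightarrow> bool" where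
  "quot_metric h B \<longleftrightarrow>
     (\<forall>X\<in>quotient_space h. \<forall>Y\<in>quotient_space h. quot_form h (B X) (B Y) = quot_form h X Y)"

end

theory Submission
  imports Defs
begin

(* Null vectors are h-orthogonal to every vector, so h descends to the cosets of U0, and once A
  maps U0 into itself the induced operator satisfies <A1 [u], [v]> = <A u, v>; the quotient
  conditions are then literally the original ones. Selfadjoint and metric operators do map U0
  into itself, and in finite dimension this invariance is equivalent to boundedness: the
  seminorm is a norm on the Euclidean orthogonal complement of U0, hence bounded below there by
  a multiple of the Euclidean norm (compactness of the unit sphere), while the U0-component of
  a vector changes neither its seminorm nor, by invariance, the seminorm of its image. *)

lemma homogeneous_le_norm:
  fixes f :: "'a::euclidean_space \<Rightarrow> real"
  assumes cont: "continuous_on UNIV f" and hom: "\<And>r x. f (r *\<^sub>R x) = \<bar>r\<bar> * f x"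
  shows "\<exists>M>0. \<forall>x. f x \<le> M * norm x"
proof -
  have "bounded (f ` sphere 0 1)"
    by (intro compact_imp_bounded compact_continuous_image continuous_on_subset[OF cont]) auto
  then obtain M where M: "M > 0" "\<And>y. y \<in> sphere 0 1 \<Longrightarrow> norm (f y) \<le> M"
    by (auto simp: bounded_pos)
  have "f x \<le> M * norm x" for x
  proof (cases "x = 0")
    case True
    then show ?thesis using hom[of 0 x] by simp
  next
    case False
    then have "f x = norm x * f (x /\<^sub>R norm x)"
      using hom[of "norm x" "x /\<^sub>R norm x"] by simp
    also have "\<dots> \<le> norm x * M"
      using M(2)[of "x /\<^sub>R norm x"] False by (intro mult_left_mono) auto
    finally show ?thesis by (simp add: mult.commute)
  qed
  with M(1) show ?thesis by blast
qed

lemma homogeneous_ge_norm_on_subspace: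
  fixes f :: "'a::euclidean_space \<Rightarrow> real"
  assumes cont: "continuous_on UNIV f" and hom: "\<And>r x. f (r *\<^sub>R x) = \<bar>r\<bar> * f x"
    and S: "subspace S" and pos: "\<And>x. x \<in> S \<Longrightarrow> x \<noteq> 0 \<Longrightarrow> f x > 0"
  shows "\<exists>m>0. \<forall>x\<in>S. m * norm x \<le> f x"
proof -
  define K where "K = sphere 0 1 \<inter> S"
  have unit_in_K: "x /\<^sub>R norm x \<in> K" if "x \<in> S" "x \<noteq> 0" for x
    using that S by (simp add: K_def subspace_scale)
  obtain m where m: "m > 0" "\<And>y. y \<in> K \<Longrightarrow> m \<le> f y"
  proof (cases "K = {}")
    case True
    show ?thesis by (rule that[of 1]) (simp_all add: True)
  next
    case False
    have "compact K" unfolding K_def by (intro compact_Int_closed closed_subspace S) simp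
    then obtain y0 where y0: "y0 \<in> K" "\<And>y. y \<in> K \<Longrightarrow> f y0 \<le> f y"
      using continuous_attains_inf[OF _ False continuous_on_subset[OF cont]] by blast
    have "f y0 > 0" using y0(1) by (intro pos) (auto simp: K_def)
    with y0(2) show ?thesis using that[of "f y0"] by blast
  qed
  have "m * norm x \<le> f x" if "x \<in> S" for x
  proof (cases "x = 0")
    case True
    then show ?thesis using hom[of 0 x] by simp
  next
    case False
    have "m * norm x \<le> f (x /\<^sub>R norm x) * norm x"
      using m(2)[OF unit_in_K[OF that False]] by (intro mult_right_mono) auto
    also have "\<dots> = f x"
      using hom[of "norm x" "x /\<^sub>R norm x"] False by (simp add: mult.commute)
    finally show ?thesis .
  qed
  with m(1) show ?thesis by blast
qed

lemma scaleR_conv_of_real_vec: "r *\<^sub>R x = (of_real r :: 'a::real_algebra_1) *s (x :: 'a ^ 'n)"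
  by (simp add: vec_eq_iff scaleR_conv_of_real[where 'a='a])

lemma clinear_op_imp_linear: "clinear_op A \<Longrightarrow> linear A"
  unfolding clinear_op_def
  by (rule linearI) (simp_all add: vec.linear_add vec.linear_scale scaleR_conv_of_real_vec)

locale semiunitary_form =
  fixes h :: "complex^'n \<Rightarrow> complex^'n \<Rightarrow> complex"
  assumes semiunitary: "semiunitary h"
begin

lemma form_add_left: "h (x + y) z = h x z + h y z"
  and form_scale_left: "h (c *s x) y = c * h x y"
  and form_hermitian: "h y x = cnj (h x y)"
  and form_self_nonneg: "0 \<le> Re (h x x)"
  using semiunitary unfolding semiunitary_def by blast+

lemma form_add_right: "h z (x + y) = h z x + h z y"
  by (metis form_hermitian form_add_left complex_cnj_add)

lemma form_scale_right: "h x (c *s y) = cnj c * h x y"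
  by (subst (1 2) form_hermitian) (simp add: form_scale_left)

lemma form_zero_left: "h 0 y = 0"
  using form_scale_left[of 0 y y] by simp

lemma form_diff_left: "h (x - y) z = h x z - h y z"
  using form_add_left[of "x - y" y z] by simp

lemma form_diff_right: "h z (x - y) = h z x - h z y"
  using form_add_right[of z "x - y" y] by simp

lemma form_sum_left: "h (sum f S) y = (\<Sum>i\<in>S. h (f i) y)"
  by (induction S rule: infinite_finite_induct) (simp_all add: form_add_left form_zero_left)

lemma form_sum_right: "h y (sum f S) = (\<Sum>i\<in>S. h y (f i))"
  by (subst form_hermitian) (simp add: form_sum_left form_hermitian[of y])

lemma form_self_real: "h x x = of_real (Re (h x x))"
proof -
  have "Im (h x x) = Im (cnj (h x x))" by (subst form_hermitian) simp
  then show ?thesis by (simp add: complex_eq_iff)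
qed

(* If h u u = 0 but a = h v u \<noteq> 0, then for real t the vector v - t a u has form value
  h v v - 2 t |a|^2, which is negative for large t. *)

lemma null_orthogonal_right:
  assumes "h u u = 0" shows "h v u = 0"
proof (rule ccontr)
  define a where "a = h v u"
  assume "h v u \<noteq> 0"
  then have a_pos: "cmod a > 0" by (simp add: a_def)
  define t where "t = (Re (h v v) + 1) / (2 * (cmod a)\<^sup>2)"
  define w where "w = v - (of_real t * a) *s u"
  have "h w w = h v v - of_real t * (cnj a * a + a * cnj a)"
    using assms form_hermitian[of u v]
    by (simp add: w_def a_def form_diff_left form_diff_right form_scale_left form_scale_right
        algebra_simps)
  also have "cnj a * a + a * cnj a = of_real (2 * (cmod a)\<^sup>2)"
    by (simp add: mult.commute flip: complex_norm_square)
  also have "of_real t * of_real (2 * (cmod a)\<^sup>2) = (of_real (Re (h v v) + 1) :: complex)"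
    using a_pos by (simp add: t_def flip: of_real_mult)
  finally have "Re (h w w) = -1" by simp
  with form_self_nonneg[of w] show False by simp
qed

lemma null_orthogonal_left: "h u u = 0 \<Longrightarrow> h u v = 0"
  using null_orthogonal_right form_hermitian by (metis complex_cnj_zero)

lemma mem_null_space: "u \<in> null_space h \<longleftrightarrow> h u u = 0"
  by (simp add: null_space_def)

lemma form_add_null:
  assumes "w \<in> null_space h" "w' \<in> null_space h"
  shows "h (x + w) (y + w') = h x y"
proof -
  have "h w w = 0" "h w' w' = 0" using assms by (simp_all add: mem_null_space)
  have "h w v = 0" for v using \<open>h w w = 0\<close> by (rule null_orthogonal_left)
  moreover have "h v w' = 0" for v using \<open>h w' w' = 0\<close> by (rule null_orthogonal_right)
  ultimately show ?thesis by (simp add: form_add_left form_add_right)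
qed

lemma subspace_null_space: "subspace (null_space h)"
  unfolding subspace_def
proof (intro conjI ballI allI)
  show "0 \<in> null_space h" by (simp add: mem_null_space form_zero_left)
  show "x + y \<in> null_space h" if "x \<in> null_space h" "y \<in> null_space h" for x y
    using form_add_null[OF that(2) that(2), of x x] that(1) by (simp add: mem_null_space)
  show "c *\<^sub>R x \<in> null_space h" if "x \<in> null_space h" for c x
    using that by (simp add: mem_null_space scaleR_conv_of_real_vec form_scale_left form_scale_right)
qed

lemma mem_coset: "y \<in> coset h x \<longleftrightarrow> y - x \<in> null_space h"
  by (force simp: coset_def)

lemma coset_self: "x \<in> coset h x"
  by (simp add: mem_coset subspace_0[OF subspace_null_space])

lemma coset_eq: "y - x \<in> null_space h \<Longrightarrow> coset h y = coset h x"
  using subspace_add[OF subspace_null_space, of "_ - y" "y - x"]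
    subspace_diff[OF subspace_null_space, of "_ - x" "y - x"]
  by (auto simp: mem_coset)

lemma some_coset: "(SOME u. u \<in> coset h x) - x \<in> null_space h"
  using someI[of "\<lambda>u. u \<in> coset h x", OF coset_self] by (simp add: mem_coset)

lemma quot_form_coset: "quot_form h (coset h x) (coset h y) = h x y"
proof -
  have "h (x + ((SOME u. u \<in> coset h x) - x)) (y + ((SOME v. v \<in> coset h y) - y)) = h x y"
    by (intro form_add_null some_coset)
  then show ?thesis by (simp add: quot_form_def)
qed

lemma induced_op_coset:
  assumes "linear A" and "A ` null_space h \<subseteq> null_space h"
  shows "induced_op h A (coset h x) = coset h (A x)"
proof -
  have "A (SOME u. u \<in> coset h x) - A x \<in> null_space h"
    using assms some_coset[of x] by (auto simp flip: linear_diff)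
  then show ?thesis by (simp add: induced_op_def coset_eq)
qed

lemma quot_selfadjoint_iff:
  assumes "linear A" and "A ` null_space h \<subseteq> null_space h"
  shows "quot_selfadjoint h (induced_op h A) \<longleftrightarrow> selfadjoint_op h A"
  by (simp add: quot_selfadjoint_def selfadjoint_op_def quotient_space_def
      induced_op_coset[OF assms] quot_form_coset)

lemma quot_metric_iff:
  assumes "linear A" and "A ` null_space h \<subseteq> null_space h"
  shows "quot_metric h (induced_op h A) \<longleftrightarrow> metric_op h A"
  by (simp add: quot_metric_def metric_op_def quotient_space_def
      induced_op_coset[OF assms] quot_form_coset)

lemma snorm_nonneg: "0 \<le> snorm h x"
  by (simp add: snorm_def form_self_nonneg)

lemma snorm_eq_0_iff: "snorm h x = 0 \<longleftrightarrow> x \<in> null_space h"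
proof -
  have "snorm h x = 0 \<longleftrightarrow> Re (h x x) = 0" by (simp add: snorm_def)
  also have "\<dots> \<longleftrightarrow> h x x = 0" by (subst (2) form_self_real) simp
  finally show ?thesis by (simp add: mem_null_space)
qed

lemma snorm_scaleR: "snorm h (r *\<^sub>R x) = \<bar>r\<bar> * snorm h x"
proof -
  have "h (r *\<^sub>R x) (r *\<^sub>R x) = of_real (r\<^sup>2) * h x x"
    by (simp add: scaleR_conv_of_real_vec form_scale_left form_scale_right power2_eq_square)
  then show ?thesis by (simp add: snorm_def real_sqrt_mult)
qed

lemma snorm_add_null: "w \<in> null_space h \<Longrightarrow> snorm h (x + w) = snorm h x"
  by (simp add: snorm_def form_add_null)

lemma form_expansion:
  "h x y = (\<Sum>i\<in>UNIV. \<Sum>j\<in>UNIV. x $ i * cnj (y $ j) * h (axis i 1) (axis j 1))"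
proof -
  have "h x y = h (\<Sum>i\<in>UNIV. x $ i *s axis i 1) (\<Sum>j\<in>UNIV. y $ j *s axis j 1)"
    by (simp only: basis_expansion)
  also have "\<dots> = (\<Sum>i\<in>UNIV. \<Sum>j\<in>UNIV. x $ i * cnj (y $ j) * h (axis i 1) (axis j 1))"
    by (simp add: form_sum_left form_sum_right form_scale_left form_scale_right
        sum_distrib_left) (subst sum.swap, simp add: ac_simps)
  finally show ?thesis .
qed

lemma continuous_on_snorm: "continuous_on UNIV (snorm h)"
proof -
  have "continuous_on UNIV (\<lambda>x. h x x)"
    by (subst form_expansion) (intro continuous_intros)
  then show ?thesis
    unfolding snorm_def by (intro continuous_intros)
qed

lemma bounded_op_imp_invariant:
  assumes "bounded_op h A" shows "A ` null_space h \<subseteq> null_space h"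
proof
  fix v assume "v \<in> A ` null_space h"
  then obtain u where "u \<in> null_space h" "v = A u" by blast
  moreover obtain c where "\<forall>u. snorm h (A u) \<le> c * snorm h u"
    using assms by (auto simp: bounded_op_def)
  ultimately have "snorm h v \<le> 0" by (metis snorm_eq_0_iff mult_zero_right)
  then show "v \<in> null_space h" by (metis snorm_nonneg snorm_eq_0_iff order_antisym)
qed

lemma selfadjoint_op_imp_invariant:
  assumes "selfadjoint_op h A" shows "A ` null_space h \<subseteq> null_space h"
proof
  fix v assume "v \<in> A ` null_space h"
  then obtain u where "h u u = 0" "v = A u" by (auto simp: mem_null_space)
  then have "h v v = h u (A v)" using assms by (simp add: selfadjoint_op_def)
  also have "\<dots> = 0" using \<open>h u u = 0\<close> by (rule null_orthogonal_left)
  finally show "v \<in> null_space h" by (simp add: mem_null_space)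
qed

lemma metric_op_imp_invariant: "metric_op h A \<Longrightarrow> A ` null_space h \<subseteq> null_space h"
  by (auto simp: metric_op_def mem_null_space)

lemma null_space_orthogonal_decomp:
  obtains y z where "y \<in> null_space h" and "\<forall>w\<in>null_space h. orthogonal w z" and "u = y + z"
proof -
  have span_null: "span (null_space h) = null_space h"
    by (simp add: span_eq_iff subspace_null_space)
  obtain y z where "y \<in> span (null_space h)"
    and z_orth: "\<And>w. w \<in> span (null_space h) \<Longrightarrow> orthogonal z w" and "u = y + z"
    using orthogonal_subspace_decomp_exists[of "null_space h" u] by blast
  moreover have "y \<in> null_space h" using \<open>y \<in> span (null_space h)\<close> span_null by simp
  moreover have "\<forall>w\<in>null_space h. orthogonal w z"
    using z_orth span_null by (simp add: orthogonal_commute)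
  ultimately show ?thesis using that by blast
qed

lemma snorm_ge_norm_on_orthogonal_null_space:
  "\<exists>m>0. \<forall>z. (\<forall>w\<in>null_space h. orthogonal w z) \<longrightarrow> m * norm z \<le> snorm h z"
proof -
  define S where "S = {z. \<forall>w\<in>null_space h. orthogonal w z}"
  have "\<exists>m>0. \<forall>z\<in>S. m * norm z \<le> snorm h z"
  proof (rule homogeneous_ge_norm_on_subspace[OF continuous_on_snorm snorm_scaleR])
    show "subspace S" unfolding S_def by (rule subspace_orthogonal_to_vectors)
    show "snorm h z > 0" if "z \<in> S" "z \<noteq> 0" for z
    proof -
      have "z \<notin> null_space h" using that by (auto simp: S_def orthogonal_def)
      then show ?thesis by (simp add: less_le snorm_nonneg snorm_eq_0_iff)
    qed
  qed
  then show ?thesis by (simp add: S_def)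
qed

lemma invariant_imp_bounded_op:
  assumes lin: "linear A" and inv: "A ` null_space h \<subseteq> null_space h"
  shows "bounded_op h A"
proof -
  obtain m where m: "m > 0"
    "\<And>z. \<forall>w\<in>null_space h. orthogonal w z \<Longrightarrow> m * norm z \<le> snorm h z"
    using snorm_ge_norm_on_orthogonal_null_space by blast
  have "\<exists>M>0. \<forall>x. snorm h (A x) \<le> M * norm x"
  proof (rule homogeneous_le_norm)
    show "continuous_on UNIV (\<lambda>x. snorm h (A x))"
      using continuous_on_compose2[OF continuous_on_snorm linear_continuous_on] lin
      by (simp add: linear_conv_bounded_linear)
    show "snorm h (A (r *\<^sub>R x)) = \<bar>r\<bar> * snorm h (A x)" for r x
      by (simp add: linear_scale[OF lin] snorm_scaleR)
  qed
  then obtain M where M: "M > 0" "\<And>x. snorm h (A x) \<le> M * norm x" by blast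
  have "snorm h (A u) \<le> M / m * snorm h u" for u
  proof -
    obtain y z where y: "y \<in> null_space h" and z: "\<forall>w\<in>null_space h. orthogonal w z"
      and u: "u = y + z"
      by (rule null_space_orthogonal_decomp)
    have "A y \<in> null_space h" using inv y by blast
    have "snorm h (A u) = snorm h (A z + A y)" by (simp add: u linear_add[OF lin] add.commute)
    also have "\<dots> = snorm h (A z)" using \<open>A y \<in> null_space h\<close> by (rule snorm_add_null)
    also have "\<dots> \<le> M / m * (m * norm z)" using M(2)[of z] m(1) by simp
    also have "\<dots> \<le> M / m * snorm h z" using m(2)[OF z] M(1) m(1) by (intro mult_left_mono) auto
    also have "snorm h z = snorm h u" using snorm_add_null[OF y, of z] by (simp add: u add.commute)
    finally show ?thesis .
  qed
  moreover have "M / m > 0" using M(1) m(1) by simp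
  ultimately show ?thesis unfolding bounded_op_def by blast
qed

end

theorem lemma2p4:
  fixes h :: "complex^'n \<Rightarrow> complex^'n \<Rightarrow> complex"
    and A :: "complex^'n \<Rightarrow> complex^'n"
  assumes "semiunitary h" and "clinear_op A"
  shows "(selfadjoint_op h A \<longleftrightarrow> bounded_op h A \<and> quot_selfadjoint h (induced_op h A))
       \<and> (metric_op h A \<longleftrightarrow> bounded_op h A \<and> quot_metric h (induced_op h A))"
proof -
  interpret semiunitary_form h by (rule semiunitary_form.intro[OF assms(1)])
  have lin: "linear A" using assms(2) by (rule clinear_op_imp_linear)
  have bounded_iff: "bounded_op h A \<longleftrightarrow> A ` null_space h \<subseteq> null_space h"
    using bounded_op_imp_invariant invariant_imp_bounded_op[OF lin] by blast
  show ?thesis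
    using bounded_iff quot_selfadjoint_iff[OF lin] quot_metric_iff[OF lin]
      selfadjoint_op_imp_invariant metric_op_imp_invariant
    by blast
qed

end
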